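(* Let $\Omega$ be a quadratic form on $\mathbb{R}^3$ of signature $(-,+,+)$ and let $S$ be a non-degenerate hyperbolic conic other than a circle, horocycle or hypercycle. Let $F$ be a non-ideal focus of $S$ and let $d$ be the corresponding directrix (the polar of $F$ with respect to $S$). Then $S$ consists of all points $x$ of the hyperbolic plane satisfying \[\delta(F,x)=\epsilon\cdot\delta(d,x)\] for some positive constant $\epsilon$, where $\delta(F,x)=\cosh\operatorname{dist}(x,F^\circ)$ if $F$ is a de Sitter point and $\delta(F,x)=\sinh\operatorname{dist}(x,F)$ if $F$ is a hyperbolic point; and $\delta(d,x)=\cosh\operatorname{dist}(x,d^\circ)$ if $d$ is a de Sitter line, $\delta(d,x)=e^{\operatorname{dist}(x,H_d)}$ if $d$ is tangent to the absolute, and $\delta(d,x)=|\sinh\operatorname{dist}(x,d)|$ if $d$ is a hyperbolic line.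
   Context: In $P(\mathbb{R}^3)$, a point $[v]$ is hyperbolic, ideal or de Sitter according as $\Omega(v,v)<0$, $=0$, $>0$; the hyperbolic plane is the set of hyperbolic points with the Cayley–Klein (hyperbolic) metric. The absolute polarity sends $[v]$ to its polar line $v^\circ=\{[w]:\Omega(v,w)=0\}$ and a line to its pole; a de Sitter point's polar is a hyperbolic line; a line is de Sitter if it misses the closed disk $\Omega\le0$ (its pole is then hyperbolic), hyperbolic if it meets the interior, tangent if it touches the absolute. A focus of $S$ is an intersection point of two (complex) common tangent lines of $S$ and the absolute $\Omega=0$ (if $S$ is tangent to the absolute, the tangency point also counts). $H_d$ denotes a fixed horocycle centered at the ideal point $d^\circ$, and distances to horocycles are signed: negative for points inside the horocycle, positive outside. $\operatorname{dist}(x,\ell)$ denotes point-to-line distance in the hyperbolic plane. *)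

theory Defs
  imports "HOL-Analysis.Analysis"
begin

text \<open>Points of P(R^3) are represented by nonzero vectors of type real^3; lines by nonzero
  covectors l (the line is the set of [w] with l \<bullet> w = 0).  All notions below are
  invariant under rescaling of representatives.\<close>

definition bil :: "real^3^3 \<Rightarrow> real^3 \<Rightarrow> real^3 \<Rightarrow> real" where
  "bil M v w = v \<bullet> (M *v w)"

definition signature_mpp :: "real^3^3 \<Rightarrow> bool" where
  "signature_mpp A \<longleftrightarrow> (\<exists>P::real^3^3. invertible P \<and>
     transpose P ** A ** P = (\<chi> i j. if i = j then (if i = 1 then -1 else 1) else 0))"

definition hyperbolic_pt :: "real^3^3 \<Rightarrow> real^3 \<Rightarrow> bool" where
  "hyperbolic_pt A x \<longleftrightarrow> bil A x x < 0"

definition ideal_pt :: "real^3^3 \<Rightarrow> real^3 \<Rightarrow> bool" where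
  "ideal_pt A x \<longleftrightarrow> bil A x x = 0"

definition deSitter_pt :: "real^3^3 \<Rightarrow> real^3 \<Rightarrow> bool" where
  "deSitter_pt A x \<longleftrightarrow> bil A x x > 0"

definition hdist :: "real^3^3 \<Rightarrow> real^3 \<Rightarrow> real^3 \<Rightarrow> real" where
  "hdist A x y = arcosh (\<bar>bil A x y\<bar> / sqrt (bil A x x * bil A y y))"

definition hline_pts :: "real^3^3 \<Rightarrow> real^3 \<Rightarrow> (real^3) set" where
  "hline_pts A l = {w. hyperbolic_pt A w \<and> l \<bullet> w = 0}"

definition setdist_h :: "real^3^3 \<Rightarrow> real^3 \<Rightarrow> (real^3) set \<Rightarrow> real" where
  "setdist_h A x S = Inf (hdist A x ` S)"

definition polar_line :: "real^3^3 \<Rightarrow> real^3 \<Rightarrow> real^3" where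
  "polar_line M f = f v* M"

text \<open>Pole (w.r.t. the absolute A) of the line with covector l: the point p with
  polar line l, i.e. p v* A = l.\<close>
definition line_pole :: "real^3^3 \<Rightarrow> real^3 \<Rightarrow> real^3" where
  "line_pole A l = matrix_inv (transpose A) *v l"

definition deSitter_line :: "real^3^3 \<Rightarrow> real^3 \<Rightarrow> bool" where
  "deSitter_line A l \<longleftrightarrow> (\<forall>w. w \<noteq> 0 \<and> l \<bullet> w = 0 \<longrightarrow> bil A w w > 0)"

definition hyperbolic_line :: "real^3^3 \<Rightarrow> real^3 \<Rightarrow> bool" where
  "hyperbolic_line A l \<longleftrightarrow> (\<exists>w. l \<bullet> w = 0 \<and> bil A w w < 0)"

definition tangent_line :: "real^3^3 \<Rightarrow> real^3 \<Rightarrow> bool" where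
  "tangent_line A l \<longleftrightarrow> (\<exists>w. w \<noteq> 0 \<and> l \<bullet> w = 0 \<and> bil A w w = 0) \<and> \<not> hyperbolic_line A l"

definition horocycle :: "real^3^3 \<Rightarrow> real^3 \<Rightarrow> real \<Rightarrow> (real^3) set" where
  "horocycle A p c = {y. hyperbolic_pt A y \<and> \<bar>bil A y p\<bar> / sqrt (- bil A y y) = c}"

definition horo_inside :: "real^3^3 \<Rightarrow> real^3 \<Rightarrow> real \<Rightarrow> real^3 \<Rightarrow> bool" where
  "horo_inside A p c x \<longleftrightarrow> \<bar>bil A x p\<bar> / sqrt (- bil A x x) < c"

definition horo_sdist :: "real^3^3 \<Rightarrow> real^3 \<Rightarrow> real \<Rightarrow> real^3 \<Rightarrow> real" where
  "horo_sdist A p c x =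
     (if horo_inside A p c x then - setdist_h A x (horocycle A p c)
      else setdist_h A x (horocycle A p c))"

definition delta_F :: "real^3^3 \<Rightarrow> real^3 \<Rightarrow> real^3 \<Rightarrow> real" where
  "delta_F A f x =
     (if deSitter_pt A f then cosh (setdist_h A x (hline_pts A (polar_line A f)))
      else sinh (hdist A x f))"

definition delta_d :: "real^3^3 \<Rightarrow> real^3 \<Rightarrow> real \<Rightarrow> real^3 \<Rightarrow> real" where
  "delta_d A l c x =
     (if deSitter_line A l then cosh (hdist A x (line_pole A l))
      else if tangent_line A l then exp (horo_sdist A (line_pole A l) c x)
      else \<bar>sinh (setdist_h A x (hline_pts A l))\<bar>)"

definition cvec :: "real^3 \<Rightarrow> complex^3" where
  "cvec f = (\<chi> i. complex_of_real (f $ i))"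

definition cdot :: "complex^3 \<Rightarrow> complex^3 \<Rightarrow> complex" where
  "cdot a b = (\<Sum>i\<in>UNIV. a $ i * b $ i)"

definition cbil :: "real^3^3 \<Rightarrow> complex^3 \<Rightarrow> complex^3 \<Rightarrow> complex" where
  "cbil M v w = (\<Sum>i\<in>UNIV. \<Sum>j\<in>UNIV. complex_of_real (M $ i $ j) * v $ i * w $ j)"

text \<open>The complex line with covector xi is tangent to the conic M: the restriction
  of the quadratic form to the line is degenerate.\<close>
definition ctangent :: "real^3^3 \<Rightarrow> complex^3 \<Rightarrow> bool" where
  "ctangent M xi \<longleftrightarrow> xi \<noteq> 0 \<and>
     (\<exists>v. v \<noteq> 0 \<and> cdot xi v = 0 \<and> (\<forall>w. cdot xi w = 0 \<longrightarrow> cbil M v w = 0))"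

text \<open>Focus of the conic Q (absolute A): intersection of two distinct (complex) common
  tangents, or a point of tangency of Q with the absolute.\<close>
definition is_focus :: "real^3^3 \<Rightarrow> real^3^3 \<Rightarrow> real^3 \<Rightarrow> bool" where
  "is_focus A Q f \<longleftrightarrow> f \<noteq> 0 \<and>
     ((\<exists>xi1 xi2. ctangent Q xi1 \<and> ctangent A xi1 \<and> ctangent Q xi2 \<and> ctangent A xi2 \<and>
         \<not> (\<exists>k. xi2 = k *s xi1) \<and> cdot xi1 (cvec f) = 0 \<and> cdot xi2 (cvec f) = 0)
      \<or> (bil A f f = 0 \<and> bil Q f f = 0 \<and> (\<exists>k. polar_line Q f = k *s polar_line A f)))"

text \<open>Circles, horocycles, hypercycles: conics in the pencil spanned by the absolute and
  a double line (double contact with the absolute).\<close>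
definition cycle_conic :: "real^3^3 \<Rightarrow> real^3^3 \<Rightarrow> bool" where
  "cycle_conic A Q \<longleftrightarrow> (\<exists>a b (l::real^3). b \<noteq> 0 \<and> l \<noteq> 0 \<and>
      Q = a *\<^sub>R A + b *\<^sub>R (\<chi> i j. l $ i * l $ j))"

definition hyperbolic_conic :: "real^3^3 \<Rightarrow> real^3^3 \<Rightarrow> bool" where
  "hyperbolic_conic A Q \<longleftrightarrow> transpose Q = Q \<and> Q \<noteq> 0 \<and> (\<exists>x. hyperbolic_pt A x \<and> bil Q x x = 0)"

end

theory Submission
  imports Defs
begin

text \<open>Tangent lines of a nondegenerate conic are the isotropic points of the inverse matrix.
  A non-ideal focus \<open>f\<close> lies on two distinct common tangents of \<open>S\<close> and the absolute, so on the
  pencil of lines through \<open>f\<close> the dual forms \<open>Q\<^sup>-\<^sup>1\<close> and \<open>A\<^sup>-\<^sup>1\<close> have the same two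
  zeros and are proportional; hence \<open>Q\<^sup>-\<^sup>1 - t A\<^sup>-\<^sup>1\<close> vanishes on \<open>f\<^sup>\<perp>\<close> and is a
  symmetrised product \<open>f \<otimes> g\<close>. Translated back to \<open>Q\<close>, with \<open>B\<close> the bilinear form of \<open>A\<close>,
  \<open>t Q(x,y) = B(x,y) - k Q(x,f) Q(y,f) - B(x,f) B(y,f) / B(f,f)\<close>, so up to a factor
  \<open>Q(x,x) = B(x,f)\<^sup>2 - B(f,f) B(x,x) - \<kappa> (x \<bullet> d)\<^sup>2\<close> with \<open>d = Q f\<close> the directrix.
  Dividing by \<open>-B(x,x)\<close>, the first two terms give \<open>|B(f,f)| \<delta>(F,x)\<^sup>2\<close> and the last one a
  positive multiple of \<open>\<delta>(d,x)\<^sup>2\<close>, whatever the types of \<open>F\<close> and \<open>d\<close>.\<close>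

subsection \<open>Bilinear forms given by matrices\<close>

lemma bil_add_left: "bil M (x + y) z = bil M x z + bil M y z"
  by (simp add: bil_def inner_add_left)

lemma bil_add_right: "bil M z (x + y) = bil M z x + bil M z y"
  by (simp add: bil_def inner_add_right matrix_vector_right_distrib)

lemma bil_diff_left: "bil M (x - y) z = bil M x z - bil M y z"
  by (simp add: bil_def inner_diff_left)

lemma bil_diff_right: "bil M z (x - y) = bil M z x - bil M z y"
  by (simp add: bil_def inner_diff_right matrix_vector_mult_diff_distrib)

lemma bil_scaleR_left: "bil M (c *\<^sub>R x) z = c * bil M x z"
  by (simp add: bil_def)

lemma bil_scaleR_right: "bil M z (c *\<^sub>R x) = c * bil M z x"
  by (simp add: bil_def matrix_vector_mult_scaleR)

lemmas bil_linear = bil_add_left bil_add_right bil_diff_left bil_diff_right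
  bil_scaleR_left bil_scaleR_right

lemma bil_commute: "transpose M = M \<Longrightarrow> bil M x y = bil M y x"
  unfolding bil_def by (metis dot_lmul_matrix inner_commute transpose_matrix_vector)

lemma bil_axis: "bil M (axis i 1) (axis j 1) = M $ i $ j"
proof -
  have "(M *v axis j 1) $ i = M $ i $ j"
    by (simp add: matrix_vector_mult_def axis_def if_distrib cong: if_cong)
  then show ?thesis by (simp add: bil_def inner_axis')
qed

lemma bil_diff_scaleR_matrix: "bil (M - t *\<^sub>R N) x y = bil M x y - t * bil N x y"
  by (simp add: bil_def matrix_vector_mult_diff_rdistrib scaleR_matrix_vector_assoc[symmetric]
      inner_diff_right)

lemma transpose_diff_scaleR: "transpose (M - t *\<^sub>R N) = transpose M - t *\<^sub>R transpose (N :: real^'n^'n)"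
  by (simp add: transpose_def vec_eq_iff)

lemma symmetric_matrix_inner:
  fixes M :: "real^'n^'n"
  assumes "transpose M = M"
  shows "(M *v x) \<bullet> y = x \<bullet> (M *v y)"
  by (metis assms dot_lmul_matrix vector_transpose_matrix)

lemma inner_polar_line: "transpose M = M \<Longrightarrow> x \<bullet> polar_line M f = bil M x f"
  by (simp add: polar_line_def bil_def transpose_matrix_vector[symmetric])

lemma matrix_inv_inverse:
  "invertible M \<Longrightarrow> M ** matrix_inv M = mat 1 \<and> matrix_inv M ** M = mat 1"
  unfolding matrix_inv_def invertible_def by (rule someI_ex)

lemma matrix_inv_cancel_vec:
  assumes "invertible M"
  shows "M *v (matrix_inv M *v x) = x" "matrix_inv M *v (M *v x) = x"
  using matrix_inv_inverse[OF assms] by (simp_all add: matrix_vector_mul_assoc)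

lemma invertible_matrix_inv: "invertible M \<Longrightarrow> invertible (matrix_inv M)"
  using matrix_inv_inverse unfolding invertible_def by blast

lemma symmetric_matrix_inv:
  fixes M :: "real^'n^'n"
  assumes "transpose M = M" "invertible M"
  shows "transpose (matrix_inv M) = matrix_inv M"
proof -
  have inv: "M ** matrix_inv M = mat 1" "matrix_inv M ** M = mat 1"
    using matrix_inv_inverse[OF assms(2)] by auto
  have left: "transpose (matrix_inv M) ** M = mat 1"
    using arg_cong[OF inv(1), of transpose] by (simp add: matrix_transpose_mul assms(1))
  have "transpose (matrix_inv M) = transpose (matrix_inv M) ** (M ** matrix_inv M)"
    using inv by simp
  also have "\<dots> = matrix_inv M"
    using left by (simp add: matrix_mul_assoc)
  finally show ?thesis .
qed

lemma bil_inverse_pencil_conjugate: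
  fixes M N :: "real^3^3"
  assumes "transpose M = M" "invertible M" "invertible N"
  shows "bil (matrix_inv M - t *\<^sub>R matrix_inv N) (M *v x) (N *v y) = bil N x y - t * bil M x y"
proof -
  have "bil (matrix_inv M) (M *v x) (N *v y) = bil N x y"
    unfolding bil_def symmetric_matrix_inner[OF assms(1)] matrix_inv_cancel_vec[OF assms(2)] ..
  moreover have "bil (matrix_inv N) (M *v x) (N *v y) = bil M x y"
    unfolding bil_def symmetric_matrix_inner[OF assms(1)] matrix_inv_cancel_vec[OF assms(3)] ..
  ultimately show ?thesis unfolding bil_diff_scaleR_matrix by simp
qed

lemma polar_line_nonzero:
  assumes "transpose M = M" "invertible M" "f \<noteq> 0"
  shows "polar_line M f \<noteq> 0"
  by (metis assms matrix_inv_cancel_vec(2) matrix_vector_mult_0_right polar_line_def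
      transpose_matrix_vector)

lemma bil_eq_0_if_quadratic_vanishes_on_plane:
  assumes sym: "transpose M = M" and vanish: "\<And>\<eta>. \<eta> \<bullet> f = 0 \<Longrightarrow> bil M \<eta> \<eta> = 0"
    and "u \<bullet> f = 0" "v \<bullet> f = 0"
  shows "bil M u v = 0"
proof -
  have "bil M (u + v) (u + v) = 0"
    using assms(3,4) by (intro vanish) (simp add: inner_add_left)
  then have "bil M u u + 2 * bil M u v + bil M v v = 0"
    by (simp add: bil_linear bil_commute[OF sym, of v u])
  then show ?thesis using vanish assms(3,4) by simp
qed

lemma bil_eq_symmetric_product:
  fixes M :: "real^3^3"
  assumes sym: "transpose M = M" and f: "f \<noteq> 0"
    and vanish: "\<And>\<eta>. \<eta> \<bullet> f = 0 \<Longrightarrow> bil M \<eta> \<eta> = 0"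
  shows "\<exists>g. \<forall>x y. bil M x y = (x \<bullet> f) * (g \<bullet> y) + (g \<bullet> x) * (f \<bullet> y)"
proof -
  note Ms = bil_commute[OF sym]
  define s where "s = f \<bullet> f"
  have s: "s > 0" using f unfolding s_def by simp
  define K where "K = bil M f f"
  define g where "g = (1/s) *\<^sub>R (M *v f) - (K / (2 * s^2)) *\<^sub>R f"
  have gy: "g \<bullet> y = bil M y f / s - K * (f \<bullet> y) / (2 * s^2)" for y
    unfolding g_def bil_def
    by (simp add: inner_diff_left inner_commute[of f y] inner_commute[of "M *v f" y])
  have "bil M x y = (x \<bullet> f) * (g \<bullet> y) + (g \<bullet> x) * (f \<bullet> y)" for x y
  proof -
    define a where "a = (x \<bullet> f) / s"
    define b where "b = (y \<bullet> f) / s"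
    define x' where "x' = x - a *\<^sub>R f"
    define y' where "y' = y - b *\<^sub>R f"
    have x'f: "x' \<bullet> f = 0" and y'f: "y' \<bullet> f = 0"
      unfolding x'_def y'_def a_def b_def s_def using s s_def by (simp_all add: inner_diff_left)
    have x: "x = x' + a *\<^sub>R f" and y: "y = y' + b *\<^sub>R f"
      unfolding x'_def y'_def by simp_all
    have "bil M x y = bil M x' y' + b * bil M x' f + a * bil M f y' + a * b * K"
      unfolding K_def by (subst x, subst y) (simp add: bil_linear algebra_simps)
    also have "\<dots> = b * bil M x f + a * bil M y f - a * b * K"
    proof -
      have x'_f: "bil M x' f = bil M x f - a * K" and f_y': "bil M f y' = bil M y f - b * K"
        unfolding x'_def y'_def K_def by (simp_all add: bil_linear Ms[of f y])
      show ?thesis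
        using bil_eq_0_if_quadratic_vanishes_on_plane[OF sym vanish x'f y'f]
        unfolding x'_f f_y' by (simp add: algebra_simps)
    qed
    finally have e: "bil M x y = b * bil M x f + a * bil M y f - a * b * K" .
    show ?thesis
      unfolding e gy a_def b_def using s
      by (simp add: inner_commute[of f y] inner_commute[of f x] field_simps power2_eq_square)
  qed
  then show ?thesis by blast
qed

lemma invertible_bil_nonvanishing_on_plane:
  fixes M :: "real^3^3"
  assumes sym: "transpose M = M" and inv: "invertible M" and f: "f \<noteq> 0"
  shows "\<exists>\<eta>. \<eta> \<bullet> f = 0 \<and> bil M \<eta> \<eta> \<noteq> 0"
proof (rule ccontr)
  assume "\<not> ?thesis"
  then obtain g where g: "\<And>x y. bil M x y = (x \<bullet> f) * (g \<bullet> y) + (g \<bullet> x) * (f \<bullet> y)"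
    using bil_eq_symmetric_product[OF sym f] by blast
  have entries: "M $ i $ j = f $ i * g $ j + g $ i * f $ j" for i j
    using g[of "axis i 1" "axis j 1"] by (simp add: bil_axis inner_axis inner_axis')
  have "det M = 0" unfolding det_3 entries by algebra
  then show False using inv invertible_det_nz by blast
qed

lemma hyperbolic_line_if_not_deSitter_tangent:
  "\<not> deSitter_line A l \<Longrightarrow> \<not> tangent_line A l \<Longrightarrow> hyperbolic_line A l"
  unfolding deSitter_line_def tangent_line_def hyperbolic_line_def
  by (fastforce simp: le_less)

subsection \<open>Complex common tangents\<close>

definition ccross :: "complex^3 \<Rightarrow> complex^3 \<Rightarrow> complex^3" where
  "ccross a b = vector [a$2 * b$3 - a$3 * b$2, a$3 * b$1 - a$1 * b$3, a$1 * b$2 - a$2 * b$1]"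

lemma ccross_nth:
  "ccross a b $ 1 = a$2 * b$3 - a$3 * b$2"
  "ccross a b $ 2 = a$3 * b$1 - a$1 * b$3"
  "ccross a b $ 3 = a$1 * b$2 - a$2 * b$1"
  by (simp_all add: ccross_def)

lemma cdot_3: "cdot a b = a$1 * b$1 + a$2 * b$2 + a$3 * b$3"
  by (simp add: cdot_def sum_3)

lemma cdot_cvec: "cdot (cvec x) (cvec y) = complex_of_real (x \<bullet> y)"
  by (simp add: cdot_def cvec_def inner_vec_def)

lemma cbil_cvec: "cbil M (cvec x) (cvec x) = complex_of_real (bil M x x)"
  by (simp add: cbil_def cvec_def bil_def inner_vec_def matrix_vector_mult_def
      sum_distrib_left algebra_simps)

lemma ccross_ccross: "ccross a (ccross b c) = cdot a c *s b - cdot a b *s c"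
  by (simp add: vec_eq_iff forall_3 ccross_nth cdot_3) algebra

lemma cdot_ccross_swap: "cdot u (ccross v w) = cdot w (ccross u v)"
  by (simp add: cdot_3 ccross_nth) algebra

lemma cdot_ccross_self: "cdot v (ccross v w) = 0"
  by (simp add: cdot_3 ccross_nth) algebra

lemma proportional_if_ccross_eq_0:
  assumes "\<xi> \<noteq> 0" "ccross u \<xi> = 0"
  shows "\<exists>\<mu>. u = \<mu> *s \<xi>"
proof -
  have e: "u$2 * \<xi>$3 = u$3 * \<xi>$2" "u$3 * \<xi>$1 = u$1 * \<xi>$3" "u$1 * \<xi>$2 = u$2 * \<xi>$1"
    using assms(2) by (simp_all add: vec_eq_iff forall_3 ccross_nth)
  consider "\<xi>$1 \<noteq> 0" | "\<xi>$2 \<noteq> 0" | "\<xi>$3 \<noteq> 0" using assms(1) by (auto simp: vec_eq_iff forall_3)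
  then show ?thesis
  proof cases
    case 1
    show ?thesis by (rule exI[of _ "u$1 / \<xi>$1"]) (use 1 e in \<open>auto simp: vec_eq_iff forall_3 field_simps\<close>)
  next
    case 2
    show ?thesis by (rule exI[of _ "u$2 / \<xi>$2"]) (use 2 e in \<open>auto simp: vec_eq_iff forall_3 field_simps\<close>)
  next
    case 3
    show ?thesis by (rule exI[of _ "u$3 / \<xi>$3"]) (use 3 e in \<open>auto simp: vec_eq_iff forall_3 field_simps\<close>)
  qed
qed

lemma proportional_if_kernel_subset:
  assumes "\<xi> \<noteq> 0" "\<And>w. cdot \<xi> w = 0 \<Longrightarrow> cdot u w = 0"
  shows "\<exists>\<mu>. u = \<mu> *s \<xi>"
proof (rule proportional_if_ccross_eq_0[OF assms(1)])
  have "cdot e (ccross u \<xi>) = 0" for e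
    using assms(2)[OF cdot_ccross_self[of \<xi> e]] by (simp add: cdot_ccross_swap)
  from this[of "axis 1 1"] this[of "axis 2 1"] this[of "axis 3 1"]
  show "ccross u \<xi> = 0" by (simp add: vec_eq_iff forall_3 cdot_3 axis_def)
qed

definition cvector_matrix_mult :: "complex^3 \<Rightarrow> real^3^3 \<Rightarrow> complex^3" where
  "cvector_matrix_mult v M = (\<chi> j. \<Sum>i\<in>UNIV. complex_of_real (M$i$j) * v$i)"

lemma cbil_eq_cdot: "cbil M v w = cdot (cvector_matrix_mult v M) w"
  unfolding cbil_def cdot_def cvector_matrix_mult_def by (simp add: sum_3 algebra_simps)

lemma cvector_matrix_mult_inverse:
  assumes "N ** M = mat 1" "transpose M = M"
  shows "(\<Sum>j\<in>UNIV. complex_of_real (N$i$j) * cvector_matrix_mult v M $ j) = v$i"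
proof -
  have M: "M$l$j = M$j$l" for l j
    using arg_cong[OF assms(2), of "\<lambda>X. X$l$j"] by (simp add: transpose_def)
  have "(\<Sum>j\<in>UNIV. complex_of_real (N$i$j) * cvector_matrix_mult v M $ j)
      = (\<Sum>j\<in>UNIV. \<Sum>l\<in>UNIV. complex_of_real (N$i$j) * (complex_of_real (M$l$j) * v$l))"
    unfolding cvector_matrix_mult_def by (simp add: sum_distrib_left)
  also have "\<dots> = (\<Sum>l\<in>UNIV. \<Sum>j\<in>UNIV. complex_of_real (N$i$j) * (complex_of_real (M$l$j) * v$l))"
    by (rule sum.swap)
  also have "\<dots> = (\<Sum>l\<in>UNIV. (\<Sum>j\<in>UNIV. complex_of_real (N$i$j * M$j$l)) * v$l)"
    unfolding sum_distrib_right by (intro sum.cong refl) (simp add: M)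
  also have "\<dots> = (\<Sum>l\<in>UNIV. complex_of_real ((N ** M)$i$l) * v$l)"
    unfolding matrix_matrix_mult_def by simp
  also have "\<dots> = (\<Sum>l\<in>UNIV. (if i = l then v$l else 0))"
    using assms(1) by (intro sum.cong) (auto simp: mat_def)
  finally show ?thesis by simp
qed

lemma ctangent_imp_dual_isotropic:
  assumes sym: "transpose M = M" and inv: "invertible M" and t: "ctangent M \<xi>"
  shows "cbil (matrix_inv M) \<xi> \<xi> = 0"
proof -
  obtain v where v: "v \<noteq> 0" "cdot \<xi> v = 0" "\<And>w. cdot \<xi> w = 0 \<Longrightarrow> cbil M v w = 0"
    and \<xi>: "\<xi> \<noteq> 0"
    using t unfolding ctangent_def by blast
  obtain \<mu> where \<mu>: "cvector_matrix_mult v M = \<mu> *s \<xi>"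
    using proportional_if_kernel_subset[OF \<xi>] v(3) cbil_eq_cdot by metis
  define N where "N = matrix_inv M"
  have vi: "v$i = \<mu> * (\<Sum>j\<in>UNIV. complex_of_real (N$i$j) * \<xi>$j)" for i
    using cvector_matrix_mult_inverse[of N M i v] matrix_inv_inverse[OF inv] sym
    unfolding \<mu> N_def by (simp add: sum_distrib_left algebra_simps)
  then have "\<mu> \<noteq> 0" using v(1) by (auto simp: vec_eq_iff)
  moreover have "cdot \<xi> v = \<mu> * cbil N \<xi> \<xi>"
    unfolding cdot_def cbil_def vi by (simp add: sum_3 algebra_simps)
  ultimately show ?thesis using v(2) N_def by simp
qed

text \<open>Cramer's rule in the plane \<open>f\<^sup>\<perp>\<close> with basis \<open>a, b\<close>; the normal \<open>a \<times> b\<close> is parallel to \<open>f\<close>.\<close>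

lemma cvec_in_span_of_lines_through:
  fixes a b :: "complex^3" and f \<eta> :: "real^3"
  assumes a: "a \<noteq> 0" and indep: "\<not> (\<exists>k. b = k *s a)" and f: "f \<noteq> 0"
    and af: "cdot a (cvec f) = 0" and bf: "cdot b (cvec f) = 0" and \<eta>f: "\<eta> \<bullet> f = 0"
  shows "\<exists>\<alpha> \<beta>. cvec \<eta> = \<alpha> *s a + \<beta> *s b"
proof -
  define F where "F = cvec f"
  define e where "e = cvec \<eta>"
  define n where "n = ccross a b"
  have FF: "cdot F F \<noteq> 0" unfolding F_def cdot_cvec using f by simp
  have "n \<noteq> 0"
  proof
    assume "n = 0"
    then have "ccross b a = 0" unfolding n_def by (auto simp: vec_eq_iff forall_3 ccross_nth mult.commute)
    then show False using proportional_if_ccross_eq_0[OF a] indep by blast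
  qed
  moreover have "ccross F n = 0"
    unfolding n_def ccross_ccross using af bf unfolding F_def by (simp add: cdot_def mult.commute)
  ultimately obtain \<mu> where \<mu>: "F = \<mu> *s n" using proportional_if_ccross_eq_0 by blast
  define D where "D = cdot n F"
  have "\<mu> * D = cdot F F" unfolding D_def \<mu> by (simp add: cdot_3 algebra_simps)
  then have D: "D \<noteq> 0" using FF by auto
  have "\<mu> * cdot n e = cdot F e" unfolding \<mu> by (simp add: cdot_3 algebra_simps)
  moreover have "cdot F e = 0" unfolding F_def e_def cdot_cvec using \<eta>f by (simp add: inner_commute)
  moreover have "\<mu> \<noteq> 0" using FF \<mu> by (auto simp: cdot_3)
  ultimately have ne: "cdot n e = 0" by simp
  have cramer: "D *s e = cdot (ccross e b) F *s a + cdot (ccross a e) F *s b + cdot n e *s F"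
    unfolding D_def n_def by (simp add: vec_eq_iff forall_3 cdot_3 ccross_nth) algebra
  have "e = (cdot (ccross e b) F / D) *s a + (cdot (ccross a e) F / D) *s b"
    using arg_cong[OF cramer, of "\<lambda>v. (1 / D) *s v"] ne D
    by (simp add: vec_eq_iff forall_3 field_simps)
  then show ?thesis unfolding e_def by blast
qed

lemma cbil_linear_combination:
  assumes "transpose N = N"
  shows "cbil N (\<alpha> *s a + \<beta> *s b) (\<alpha> *s a + \<beta> *s b)
           = \<alpha>^2 * cbil N a a + 2 * \<alpha> * \<beta> * cbil N a b + \<beta>^2 * cbil N b b"
proof -
  have N: "N$i$j = N$j$i" for i j
    using arg_cong[OF assms, of "\<lambda>X. X$i$j"] by (simp add: transpose_def)
  show ?thesis unfolding cbil_def
    by (simp add: sum_3 N[of 2 1] N[of 3 1] N[of 3 2] power2_eq_square algebra_simps)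
qed

text \<open>A line through \<open>f\<close> is \<open>\<alpha> \<xi>1 + \<beta> \<xi>2\<close>, where both forms take the value
  \<open>2 \<alpha> \<beta>\<close> times their polarisation at \<open>(\<xi>1, \<xi>2)\<close>.\<close>

lemma dual_forms_proportional_on_pencil:
  fixes M N :: "real^3^3" and f :: "real^3" and \<xi>1 \<xi>2 :: "complex^3"
  assumes sM: "transpose M = M" and sN: "transpose N = N"
    and M: "cbil M \<xi>1 \<xi>1 = 0" "cbil M \<xi>2 \<xi>2 = 0"
    and N: "cbil N \<xi>1 \<xi>1 = 0" "cbil N \<xi>2 \<xi>2 = 0"
    and \<xi>1: "\<xi>1 \<noteq> 0" and indep: "\<not> (\<exists>k. \<xi>2 = k *s \<xi>1)" and f: "f \<noteq> 0"
    and f1: "cdot \<xi>1 (cvec f) = 0" and f2: "cdot \<xi>2 (cvec f) = 0"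
    and \<eta>0: "\<eta>0 \<bullet> f = 0" "bil M \<eta>0 \<eta>0 \<noteq> 0"
  shows "\<exists>t. \<forall>\<eta>. \<eta> \<bullet> f = 0 \<longrightarrow> bil N \<eta> \<eta> = t * bil M \<eta> \<eta>"
proof -
  define u where "u = cbil M \<xi>1 \<xi>2"
  define w where "w = cbil N \<xi>1 \<xi>2"
  have expand: "\<exists>\<alpha> \<beta>. complex_of_real (bil M \<eta> \<eta>) = 2 * \<alpha> * \<beta> * u
                    \<and> complex_of_real (bil N \<eta> \<eta>) = 2 * \<alpha> * \<beta> * w"
    if \<eta>f: "\<eta> \<bullet> f = 0" for \<eta>
  proof -
    obtain \<alpha> \<beta> where \<eta>: "cvec \<eta> = \<alpha> *s \<xi>1 + \<beta> *s \<xi>2"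
      using cvec_in_span_of_lines_through[OF \<xi>1 indep f f1 f2 \<eta>f] by blast
    show ?thesis
      using cbil_linear_combination[OF sM, of \<alpha> \<xi>1 \<beta> \<xi>2] cbil_linear_combination[OF sN, of \<alpha> \<xi>1 \<beta> \<xi>2]
        M N unfolding u_def w_def \<eta>[symmetric] cbil_cvec by auto
  qed
  have cross: "complex_of_real (bil N \<eta> \<eta>) * u = complex_of_real (bil M \<eta> \<eta>) * w"
    if "\<eta> \<bullet> f = 0" for \<eta>
    using expand[OF that] by auto
  have u: "u \<noteq> 0" using expand[OF \<eta>0(1)] \<eta>0(2) by auto
  have "bil N \<eta> \<eta> * bil M \<eta>0 \<eta>0 = bil M \<eta> \<eta> * bil N \<eta>0 \<eta>0" if \<eta>: "\<eta> \<bullet> f = 0" for \<eta>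
  proof -
    have "complex_of_real (bil N \<eta> \<eta> * bil M \<eta>0 \<eta>0) * u
        = complex_of_real (bil M \<eta>0 \<eta>0) * (complex_of_real (bil N \<eta> \<eta>) * u)"
      by (simp add: algebra_simps)
    also have "\<dots> = complex_of_real (bil M \<eta> \<eta>) * (complex_of_real (bil M \<eta>0 \<eta>0) * w)"
      unfolding cross[OF \<eta>] by (simp add: algebra_simps)
    also have "\<dots> = complex_of_real (bil M \<eta> \<eta> * bil N \<eta>0 \<eta>0) * u"
      unfolding cross[OF \<eta>0(1), symmetric] by (simp add: algebra_simps)
    finally show ?thesis using u by (simp only: mult_cancel_right of_real_eq_iff) simp
  qed
  then have "bil N \<eta> \<eta> = (bil N \<eta>0 \<eta>0 / bil M \<eta>0 \<eta>0) * bil M \<eta> \<eta>" if "\<eta> \<bullet> f = 0" for \<eta>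
    using that \<eta>0(2) by (simp add: field_simps)
  then show ?thesis by blast
qed

subsection \<open>Forms of signature (-,+,+)\<close>

definition std_lorentz :: "real^3 \<Rightarrow> real^3 \<Rightarrow> real" where
  "std_lorentz u v = - u$1 * v$1 + u$2 * v$2 + u$3 * v$3"

lemma signature_mpp_imp_std_lorentz:
  assumes "signature_mpp A"
  shows "\<exists>P. invertible P \<and> (\<forall>u v. bil A (P *v u) (P *v v) = std_lorentz u v)"
proof -
  define D :: "real^3^3" where "D = (\<chi> i j. if i = j then (if i = 1 then -1 else 1) else 0)"
  obtain P where P: "invertible P" "transpose P ** A ** P = D"
    using assms unfolding signature_mpp_def D_def by blast
  have "bil A (P *v u) (P *v v) = std_lorentz u v" for u v
  proof -
    have "bil A (P *v u) (P *v v) = (u v* transpose P) \<bullet> (A *v (P *v v))"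
      by (simp add: bil_def)
    also have "\<dots> = u \<bullet> ((transpose P ** A ** P) *v v)"
      unfolding dot_lmul_matrix by (simp add: matrix_vector_mul_assoc matrix_mul_assoc)
    also have "\<dots> = std_lorentz u v"
      unfolding P(2) D_def by (simp add: std_lorentz_def inner_vec_def matrix_vector_mult_def sum_3)
    finally show ?thesis .
  qed
  with P(1) show ?thesis by blast
qed

lemma std_lorentz_reverse_cauchy_schwarz:
  assumes "std_lorentz u u < 0"
  shows "std_lorentz u v ^ 2 \<ge> std_lorentz u u * std_lorentz v v"
    and "std_lorentz u v ^ 2 = std_lorentz u u * std_lorentz v v
           \<Longrightarrow> v = (std_lorentz u v / std_lorentz u u) *\<^sub>R u"
proof -
  define z2 where "z2 = u$1 * v$2 - v$1 * u$2"
  define z3 where "z3 = u$1 * v$3 - v$1 * u$3"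
  have id: "std_lorentz u u * (z2^2 + z3^2) = (v$1 * std_lorentz u u - u$1 * std_lorentz u v)^2
        + (u$1)^2 * (std_lorentz u u * std_lorentz v v - (std_lorentz u v)^2)"
    unfolding z2_def z3_def std_lorentz_def by algebra
  have u1: "u$1 \<noteq> 0"
    using assms unfolding std_lorentz_def by (smt (verit, best) zero_le_square)
  have le: "std_lorentz u u * (z2^2 + z3^2) \<le> 0"
    using assms by (simp add: mult_nonpos_nonneg)
  then have "(u$1)^2 * (std_lorentz u u * std_lorentz v v - (std_lorentz u v)^2) \<le> 0"
    using id by (smt (verit) zero_le_power2)
  moreover have "(u$1)^2 > 0" using u1 by simp
  ultimately show "std_lorentz u v ^ 2 \<ge> std_lorentz u u * std_lorentz v v"
    by (smt (verit) mult_pos_pos)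
  assume "std_lorentz u v ^ 2 = std_lorentz u u * std_lorentz v v"
  then have e: "std_lorentz u u * (z2^2 + z3^2) = (v$1 * std_lorentz u u - u$1 * std_lorentz u v)^2"
    using id by simp
  then have "(v$1 * std_lorentz u u - u$1 * std_lorentz u v)^2 = 0"
    using le by (smt (verit) zero_le_power2)
  then have v1: "v$1 * std_lorentz u u - u$1 * std_lorentz u v = 0" and "z2^2 + z3^2 = 0"
    using e assms by simp_all
  then have z: "z2 = 0" "z3 = 0"
    by (smt (verit) zero_le_power2 power_zero_numeral zero_eq_power2)+
  have c: "std_lorentz u v / std_lorentz u u = v$1 / u$1"
    using v1 u1 assms by (simp add: field_simps)
  show "v = (std_lorentz u v / std_lorentz u u) *\<^sub>R u"
    unfolding c using z u1 unfolding z2_def z3_def by (simp add: vec_eq_iff forall_3 field_simps)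
qed

lemma mean_inverse_le_of_quadratic_bound:
  fixes a b X Y u :: real
  assumes "X > 0" "Y > 0" "a \<noteq> 0" "b \<noteq> 0" "a^2 * X + b^2 * Y \<le> 2 * \<bar>a\<bar> * \<bar>b\<bar> * \<bar>u\<bar>"
  defines "t \<equiv> \<bar>b\<bar> * sqrt Y / (sqrt X * \<bar>a\<bar>)"
  shows "(t + inverse t) / 2 \<le> \<bar>u\<bar> / (sqrt X * sqrt Y)"
proof -
  define sX where "sX = sqrt X"
  define sY where "sY = sqrt Y"
  have sX: "sX > 0" "X = sX^2" using assms(1) unfolding sX_def by auto
  have sY: "sY > 0" "Y = sY^2" using assms(2) unfolding sY_def by auto
  have ab: "\<bar>a\<bar> > 0" "\<bar>b\<bar> > 0" using assms by auto
  have "(t + inverse t) / 2 = (b^2 * sY^2 + a^2 * sX^2) / (2 * \<bar>a\<bar> * \<bar>b\<bar> * sX * sY)"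
    unfolding t_def sX_def[symmetric] sY_def[symmetric] using sX sY ab
    by (simp add: field_simps power2_eq_square)
  also have "\<dots> \<le> (2 * \<bar>a\<bar> * \<bar>b\<bar> * \<bar>u\<bar>) / (2 * \<bar>a\<bar> * \<bar>b\<bar> * sX * sY)"
    by (rule divide_right_mono) (use assms(5) sX sY ab in \<open>auto simp: algebra_simps\<close>)
  also have "\<dots> = \<bar>u\<bar> / (sX * sY)" using ab sX sY by (simp add: field_simps)
  finally show ?thesis unfolding sX_def sY_def .
qed

locale lorentz_form =
  fixes A :: "real^3^3"
  assumes symmetric: "transpose A = A" and signature: "signature_mpp A"
begin

abbreviation B where "B \<equiv> bil A"

lemma B_commute: "B x y = B y x"
  using bil_commute[OF symmetric] .

lemma reverse_cauchy_schwarz: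
  assumes "B x x < 0"
  shows "B x y ^ 2 \<ge> B x x * B y y"
    and "B x y ^ 2 = B x x * B y y \<Longrightarrow> y = (B x y / B x x) *\<^sub>R x"
proof -
  obtain P where P: "invertible P" "\<And>u v. B (P *v u) (P *v v) = std_lorentz u v"
    using signature_mpp_imp_std_lorentz[OF signature] by blast
  define u where "u = matrix_inv P *v x"
  define v where "v = matrix_inv P *v y"
  have xu: "x = P *v u" and yv: "y = P *v v"
    using matrix_inv_cancel_vec(1)[OF P(1)] u_def v_def by auto
  have uu: "std_lorentz u u < 0" using assms P(2) xu by metis
  show "B x y ^ 2 \<ge> B x x * B y y"
    using std_lorentz_reverse_cauchy_schwarz(1)[OF uu, of v] P(2) xu yv by simp
  assume "B x y ^ 2 = B x x * B y y"
  then have "v = (std_lorentz u v / std_lorentz u u) *\<^sub>R u"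
    using std_lorentz_reverse_cauchy_schwarz(2)[OF uu, of v] P(2) xu yv by simp
  then show "y = (B x y / B x x) *\<^sub>R x"
    using P(2) xu yv by (metis matrix_vector_mult_scaleR)
qed

lemma invertible: "invertible A"
proof -
  obtain P where P: "invertible P" "\<And>u v. B (P *v u) (P *v v) = std_lorentz u v"
    using signature_mpp_imp_std_lorentz[OF signature] by blast
  have "x = 0" if Ax: "A *v x = 0" for x
  proof -
    define u where "u = matrix_inv P *v x"
    have xu: "x = P *v u" using matrix_inv_cancel_vec(1)[OF P(1)] u_def by auto
    have "std_lorentz u v = 0" for v
    proof -
      have "std_lorentz u v = B (P *v v) x" using P(2)[of u v] xu B_commute by metis
      then show ?thesis using Ax by (simp add: bil_def)
    qed
    from this[of "axis 1 1"] this[of "axis 2 1"] this[of "axis 3 1"] have "u = 0"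
      by (simp add: std_lorentz_def axis_def vec_eq_iff forall_3)
    then show "x = 0" using xu by simp
  qed
  then show ?thesis
    using matrix_left_invertible_ker invertible_left_inverse by blast
qed

lemma isotropic_orthogonal_nonneg:
  assumes "p \<noteq> 0" "B p p = 0" "B z p = 0"
  shows "B z z \<ge> 0"
proof (rule ccontr)
  assume "\<not> B z z \<ge> 0"
  then have "p = (B z p / B z z) *\<^sub>R z"
    using assms reverse_cauchy_schwarz(2)[of z p] by simp
  then show False using assms by simp
qed

lemma timelike_not_orthogonal_isotropic:
  assumes "B x x < 0" "p \<noteq> 0" "B p p = 0"
  shows "B x p \<noteq> 0"
  using isotropic_orthogonal_nonneg[OF assms(2,3), of x] assms(1) by linarith

lemma spacelike_has_timelike_orthogonal:
  assumes "B p p > 0"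
  shows "\<exists>w. B w w < 0 \<and> B w p = 0"
proof -
  obtain P where P: "invertible P" "\<And>u v. B (P *v u) (P *v v) = std_lorentz u v"
    using signature_mpp_imp_std_lorentz[OF signature] by blast
  define h where "h = P *v axis 1 1"
  have h: "B h h < 0" unfolding h_def P(2) by (simp add: std_lorentz_def axis_def)
  define w where "w = h - (B h p / B p p) *\<^sub>R p"
  have "B w p = 0" using assms unfolding w_def by (simp add: bil_linear)
  moreover have "B w w = B h h - (B h p)^2 / B p p"
    using assms unfolding w_def by (simp add: bil_linear B_commute[of p h] field_simps power2_eq_square)
  moreover have "(B h p)^2 / B p p \<ge> 0" using assms by simp
  ultimately show ?thesis using h by (intro exI[of _ w]) linarith
qed

lemma bil_line_pole: "B w (line_pole A l) = w \<bullet> l"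
  by (simp add: bil_def line_pole_def symmetric matrix_inv_cancel_vec(1)[OF invertible])

lemma line_pole_nonzero: "l \<noteq> 0 \<Longrightarrow> line_pole A l \<noteq> 0"
  using bil_line_pole[of l l] by (auto simp: bil_def)

subsection \<open>Distances\<close>

lemma hdist_cosh_arg_ge_1:
  assumes "B x x < 0" "B y y < 0"
  shows "\<bar>B x y\<bar> / sqrt (B x x * B y y) \<ge> 1"
proof -
  have "sqrt (B x x * B y y) \<le> sqrt ((B x y)^2)"
    using reverse_cauchy_schwarz(1)[OF assms(1)] by (simp only: real_sqrt_le_iff)
  moreover have "0 < B x x * B y y" using assms by (simp add: mult_neg_neg)
  ultimately show ?thesis by simp
qed

lemma hdist_nonneg: "B x x < 0 \<Longrightarrow> B y y < 0 \<Longrightarrow> hdist A x y \<ge> 0"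
  unfolding hdist_def using hdist_cosh_arg_ge_1 by simp

lemma cosh_hdist:
  "B x x < 0 \<Longrightarrow> B y y < 0 \<Longrightarrow> cosh (hdist A x y) = \<bar>B x y\<bar> / sqrt (B x x * B y y)"
  unfolding hdist_def using hdist_cosh_arg_ge_1 by simp

lemma cosh_hdist_squared:
  assumes "B x x < 0" "B y y < 0"
  shows "(cosh (hdist A x y))^2 = (B x y)^2 / (B x x * B y y)"
proof -
  have "0 < B x x * B y y" using assms by (simp add: mult_neg_neg)
  then show ?thesis unfolding cosh_hdist[OF assms] by (simp add: power_divide)
qed

lemma hdist_le_iff_cosh_squared_le:
  assumes "B x x < 0" "B y y < 0" "B z z < 0"
  shows "hdist A x y \<le> hdist A x z \<longleftrightarrow> (cosh (hdist A x y))^2 \<le> (cosh (hdist A x z))^2"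
  using cosh_real_nonneg_le_iff[of "hdist A x y" "hdist A x z"] hdist_nonneg assms
    cosh_real_nonneg power2_le_imp_le power_mono by metis

text \<open>The foot of the perpendicular from \<open>x\<close> to the polar line of \<open>p\<close> is the
  \<open>B\<close>-orthogonal projection of \<open>x\<close> onto \<open>p\<^sup>\<perp>\<close>.\<close>

lemma cosh_setdist_polar_squared:
  assumes pp: "B p p > 0" and xx: "B x x < 0"
  defines "m \<equiv> Inf (hdist A x ` {w. B w w < 0 \<and> B w p = 0})"
  shows "(cosh m)^2 = 1 + (B x p)^2 / (- B x x * B p p)"
proof -
  define w0 where "w0 = x - (B x p / B p p) *\<^sub>R p"
  have w0p: "B w0 p = 0" using pp unfolding w0_def by (simp add: bil_linear)
  have w0w0: "B w0 w0 = B x x - (B x p)^2 / B p p" and xw0: "B x w0 = B w0 w0"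
    using pp unfolding w0_def by (simp_all add: bil_linear B_commute[of p x] field_simps power2_eq_square)
  have "(B x p)^2 / B p p \<ge> 0" using pp by simp
  then have w0neg: "B w0 w0 < 0" using xx w0w0 by linarith
  have cosh_w0: "(cosh (hdist A x w0))^2 = B w0 w0 / B x x"
    using cosh_hdist_squared[OF xx w0neg] xw0 w0neg by (simp add: power2_eq_square)
  have "hdist A x w0 \<le> hdist A x w" if w: "B w w < 0" "B w p = 0" for w
  proof -
    have xw: "B x w = B w0 w"
      unfolding w0_def using w by (simp add: bil_linear B_commute[of p w])
    have pos: "B x x * B w w > 0" using xx w by (simp add: mult_neg_neg)
    have "B w0 w0 / B x x = (B w0 w0 * B w w) / (B x x * B w w)" using w by simp
    also have "\<dots> \<le> (B w0 w)^2 / (B x x * B w w)"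
      by (rule divide_right_mono) (use reverse_cauchy_schwarz(1)[OF w0neg] pos in auto)
    finally show ?thesis
      using hdist_le_iff_cosh_squared_le[OF xx w0neg w(1)] cosh_w0
        cosh_hdist_squared[OF xx w(1)] xw by simp
  qed
  then have meq: "m = hdist A x w0" unfolding m_def
    by (intro cInf_eq_minimum) (use w0neg w0p in auto)
  show "(cosh m)^2 = 1 + (B x p)^2 / (- B x x * B p p)"
    using meq cosh_w0 w0w0 xx pp by (simp add: field_simps)
qed

lemma horocycle_hdist_lower_bound:
  assumes p: "p \<noteq> 0" "B p p = 0" and c: "c > 0" and xx: "B x x < 0"
    and y: "y \<in> horocycle A p c"
  shows "\<bar>ln (\<bar>B x p\<bar> / sqrt (- B x x) / c)\<bar> \<le> hdist A x y"
proof -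
  define t where "t = \<bar>B x p\<bar> / sqrt (- B x x) / c"
  define b where "b = B x p"
  define X where "X = - B x x"
  have b: "b \<noteq> 0" unfolding b_def using timelike_not_orthogonal_isotropic[OF xx p] .
  have X: "X > 0" using xx X_def by simp
  have tpos: "t > 0" unfolding t_def b_def[symmetric] X_def[symmetric] using b X c by simp
  have yy: "B y y < 0" and yc: "\<bar>B y p\<bar> / sqrt (- B y y) = c"
    using y unfolding horocycle_def hyperbolic_pt_def by auto
  define a where "a = B y p"
  define Y where "Y = - B y y"
  have a: "a \<noteq> 0" unfolding a_def using timelike_not_orthogonal_isotropic[OF yy p] .
  have Y: "Y > 0" using yy Y_def by simp
  define z where "z = a *\<^sub>R x - b *\<^sub>R y"
  have "B z p = 0" unfolding z_def a_def b_def by (simp add: bil_linear)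
  then have "B z z \<ge> 0" using isotropic_orthogonal_nonneg[OF p] by blast
  moreover have "B z z = a^2 * B x x - 2 * a * b * B x y + b^2 * B y y"
    unfolding z_def by (simp add: bil_linear B_commute[of y x] power2_eq_square algebra_simps)
  ultimately have "a^2 * X + b^2 * Y \<le> - 2 * a * b * B x y" unfolding X_def Y_def by linarith
  also have "\<dots> \<le> 2 * \<bar>a\<bar> * \<bar>b\<bar> * \<bar>B x y\<bar>" by (simp add: abs_mult[symmetric] abs_le_iff)
  finally have ineq: "a^2 * X + b^2 * Y \<le> 2 * \<bar>a\<bar> * \<bar>b\<bar> * \<bar>B x y\<bar>" .
  have "\<bar>a\<bar> = c * sqrt Y" using yc Y unfolding a_def Y_def by (simp add: field_simps)
  then have t: "t = \<bar>b\<bar> * sqrt Y / (sqrt X * \<bar>a\<bar>)"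
    unfolding t_def b_def[symmetric] X_def[symmetric] using Y c by simp
  have "cosh (ln t) = (t + inverse t) / 2" using cosh_ln_real[OF tpos] .
  also have "\<dots> \<le> \<bar>B x y\<bar> / (sqrt X * sqrt Y)"
    unfolding t by (rule mean_inverse_le_of_quadratic_bound[OF X Y a b ineq])
  also have "\<dots> = cosh (hdist A x y)"
    using cosh_hdist[OF xx yy] unfolding X_def Y_def by (simp add: real_sqrt_mult[symmetric])
  finally have "cosh \<bar>ln t\<bar> \<le> cosh (hdist A x y)" by (cases "ln t \<ge> 0") auto
  then have "\<bar>ln t\<bar> \<le> hdist A x y"
    using cosh_real_nonneg_le_iff[of "\<bar>ln t\<bar>" "hdist A x y"] hdist_nonneg[OF xx yy] by simp
  then show ?thesis unfolding t_def .
qed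

text \<open>Sliding \<open>x\<close> along the isotropic direction \<open>p\<close> leaves \<open>B x p\<close> unchanged, so a
  suitable multiple of \<open>p\<close> moves \<open>x\<close> onto the horocycle along the geodesic through \<open>p\<close>.\<close>

lemma horocycle_nearest_point:
  assumes p: "p \<noteq> 0" "B p p = 0" and c: "c > 0" and xx: "B x x < 0"
  shows "\<exists>y \<in> horocycle A p c. hdist A x y = \<bar>ln (\<bar>B x p\<bar> / sqrt (- B x x) / c)\<bar>"
proof -
  define t where "t = \<bar>B x p\<bar> / sqrt (- B x x) / c"
  define b where "b = B x p"
  define X where "X = - B x x"
  have b: "b \<noteq> 0" unfolding b_def using timelike_not_orthogonal_isotropic[OF xx p] .
  have X: "X > 0" using xx X_def by simp
  have tpos: "t > 0" unfolding t_def b_def[symmetric] X_def[symmetric] using b X c by simp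
  define \<tau> where "\<tau> = - (b^2 / c^2 + B x x) / (2 * b)"
  define y where "y = x + \<tau> *\<^sub>R p"
  have yy: "B y y = -(b^2 / c^2)"
    unfolding y_def \<tau>_def using b p(2)
    by (simp add: bil_linear B_commute[of p x] b_def[symmetric] field_simps power2_eq_square)
  have yp: "B y p = b" unfolding y_def using p(2) by (simp add: bil_linear b_def)
  have xy: "B x y = - (X + b^2/c^2) / 2"
    unfolding y_def \<tau>_def X_def using b
    by (simp add: bil_linear b_def[symmetric] field_simps power2_eq_square)
  have yneg: "B y y < 0" using yy b c by (simp add: divide_pos_pos)
  have sqrt_yy: "sqrt (- B y y) = \<bar>b\<bar> / c" using yy c by (simp add: real_sqrt_divide)
  have on_horocycle: "y \<in> horocycle A p c"
    unfolding horocycle_def hyperbolic_pt_def using yneg sqrt_yy yp b c by simp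
  have sqrt_xxyy: "sqrt (B x x * B y y) = sqrt X * \<bar>b\<bar> / c"
  proof -
    have "B x x * B y y = X * (b/c)^2" using yy unfolding X_def by (simp add: power_divide)
    then show ?thesis using c by (simp add: real_sqrt_mult)
  qed
  have abs_xy: "\<bar>B x y\<bar> = (X + b^2/c^2) / 2"
  proof -
    have "0 \<le> X + b^2/c^2" using X by (simp add: add_nonneg_nonneg)
    then show ?thesis unfolding xy by simp
  qed
  have "cosh (hdist A x y) = (t + inverse t) / 2"
  proof -
    have t: "t = \<bar>b\<bar> / (sqrt X * c)" unfolding t_def b_def X_def by simp
    have sX: "sqrt X > 0" "(sqrt X)^2 = X" using X by auto
    show ?thesis
      unfolding cosh_hdist[OF xx yneg] sqrt_xxyy abs_xy t using sX b c
      by (simp add: field_simps power2_eq_square)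
  qed
  also have "\<dots> = cosh \<bar>ln t\<bar>" using cosh_ln_real[OF tpos] by (cases "ln t \<ge> 0") auto
  finally have "hdist A x y = \<bar>ln t\<bar>"
    using hdist_nonneg[OF xx yneg] cosh_real_nonneg_le_iff by (smt (verit) abs_ge_zero)
  then show ?thesis using on_horocycle unfolding t_def by blast
qed

lemma setdist_horocycle:
  assumes "p \<noteq> 0" "B p p = 0" "c > 0" "B x x < 0"
  shows "setdist_h A x (horocycle A p c) = \<bar>ln (\<bar>B x p\<bar> / sqrt (- B x x) / c)\<bar>"
proof -
  obtain y where "y \<in> horocycle A p c" "hdist A x y = \<bar>ln (\<bar>B x p\<bar> / sqrt (- B x x) / c)\<bar>"
    using horocycle_nearest_point[OF assms] by blast
  then show ?thesis
    unfolding setdist_h_def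
    by (intro cInf_eq_minimum) (use horocycle_hdist_lower_bound[OF assms] in \<open>auto intro: sym\<close>)
qed

lemma hline_pts_eq_orthogonal:
  assumes "\<And>w. B w p = w \<bullet> l"
  shows "hline_pts A l = {w. B w w < 0 \<and> B w p = 0}"
  unfolding hline_pts_def hyperbolic_pt_def assms by (auto simp: inner_commute)

lemma deSitter_line_pole_timelike:
  assumes l: "deSitter_line A l" "l \<noteq> 0"
  defines "p \<equiv> line_pole A l"
  shows "B p p < 0"
proof (rule ccontr)
  have Bp: "B w p = w \<bullet> l" for w unfolding p_def by (rule bil_line_pole)
  assume "\<not> B p p < 0"
  then consider "B p p > 0" | "B p p = 0" by linarith
  then show False
  proof cases
    case 1
    then obtain w where w: "B w w < 0" "B w p = 0" using spacelike_has_timelike_orthogonal by blast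
    then have "w \<noteq> 0" by (auto simp: bil_def)
    then show False using l w unfolding deSitter_line_def Bp by (auto simp: inner_commute)
  next
    case 2
    moreover have "p \<noteq> 0" "p \<bullet> l = 0"
      using 2 line_pole_nonzero[OF l(2)] Bp[of p] unfolding p_def by auto
    ultimately show False using l(1) unfolding deSitter_line_def by (auto simp: inner_commute)
  qed
qed

lemma tangent_line_pole_isotropic:
  assumes l: "tangent_line A l"
  defines "p \<equiv> line_pole A l"
  shows "B p p = 0"
proof -
  have Bp: "B w p = w \<bullet> l" for w unfolding p_def by (rule bil_line_pole)
  have "\<not> B p p > 0"
  proof
    assume "B p p > 0"
    then obtain w where "B w w < 0" "B w p = 0" using spacelike_has_timelike_orthogonal by blast
    then have "hyperbolic_line A l" unfolding hyperbolic_line_def Bp by (auto simp: inner_commute)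
    then show False using l unfolding tangent_line_def by blast
  qed
  moreover obtain w where w: "w \<noteq> 0" "l \<bullet> w = 0" "B w w = 0"
    using l unfolding tangent_line_def by blast
  have "\<not> B p p < 0"
  proof
    assume pp: "B p p < 0"
    have "B p w = 0" using w(2) Bp[of w] B_commute[of p w] by (simp add: inner_commute)
    then have "w = 0" using reverse_cauchy_schwarz(2)[OF pp, of w] w(3) by simp
    then show False using w(1) by simp
  qed
  ultimately show ?thesis by linarith
qed

lemma hyperbolic_line_pole_spacelike:
  assumes l: "hyperbolic_line A l" "l \<noteq> 0"
  defines "p \<equiv> line_pole A l"
  shows "B p p > 0"
proof (rule ccontr)
  assume "\<not> B p p > 0"
  obtain w where w: "l \<bullet> w = 0" "B w w < 0" using l unfolding hyperbolic_line_def by blast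
  have wp: "B w p = 0" using w(1) bil_line_pole unfolding p_def by (simp add: inner_commute)
  have "B p p = 0"
    using reverse_cauchy_schwarz(1)[OF w(2), of p] wp w(2) \<open>\<not> B p p > 0\<close>
    by (smt (verit, best) mult_neg_neg power_zero_numeral)
  then have "p = 0" using reverse_cauchy_schwarz(2)[OF w(2), of p] wp by simp
  then show False using line_pole_nonzero[OF l(2)] unfolding p_def by simp
qed

lemma delta_F_squared:
  assumes f: "\<not> ideal_pt A f" and xx: "B x x < 0"
  shows "delta_F A f x \<ge> 0 \<and>
    (delta_F A f x)^2 = ((B x f)^2 - B x x * B f f) / \<bar>B x x * B f f\<bar>"
proof (cases "deSitter_pt A f")
  case True
  then have ff: "B f f > 0" by (simp add: deSitter_pt_def)
  have "hline_pts A (polar_line A f) = {w. B w w < 0 \<and> B w f = 0}"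
    by (rule hline_pts_eq_orthogonal) (simp add: inner_polar_line symmetric)
  then have "delta_F A f x = cosh (Inf (hdist A x ` {w. B w w < 0 \<and> B w f = 0}))"
    using True by (simp add: delta_F_def setdist_h_def)
  moreover have "\<bar>B x x * B f f\<bar> = - B x x * B f f" using xx ff by (simp add: abs_mult)
  ultimately show ?thesis
    using cosh_setdist_polar_squared[OF ff xx] xx ff by (simp add: field_simps)
next
  case False
  then have ff: "B f f < 0" using f by (simp add: deSitter_pt_def ideal_pt_def)
  have pos: "B x x * B f f > 0" using xx ff by (simp add: mult_neg_neg)
  have "(sinh (hdist A x f))^2 = (B x f)^2 / (B x x * B f f) - 1"
    using cosh_hdist_squared[OF xx ff] by (simp add: sinh_square_eq)
  also have "\<dots> = ((B x f)^2 - B x x * B f f) / \<bar>B x x * B f f\<bar>"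
    using pos xx ff by (simp add: diff_divide_distrib)
  finally show ?thesis
    using False hdist_nonneg[OF xx ff] by (simp add: delta_F_def)
qed

lemma delta_d_tangent:
  assumes l: "tangent_line A l" "l \<noteq> 0" and c: "c > 0" and xx: "B x x < 0"
  shows "delta_d A l c x = \<bar>x \<bullet> l\<bar> / sqrt (- B x x) / c"
proof -
  define p where "p = line_pole A l"
  define t where "t = \<bar>B x p\<bar> / sqrt (- B x x) / c"
  have pp: "B p p = 0" unfolding p_def using tangent_line_pole_isotropic[OF l(1)] .
  have p: "p \<noteq> 0" unfolding p_def using line_pole_nonzero[OF l(2)] .
  have t: "t > 0"
    unfolding t_def using timelike_not_orthogonal_isotropic[OF xx p pp] xx c by simp
  have "\<not> deSitter_line A l" using l(1) unfolding tangent_line_def deSitter_line_def by force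
  moreover have "horo_sdist A p c x = ln t"
  proof -
    have "horo_inside A p c x \<longleftrightarrow> t < 1"
      unfolding horo_inside_def t_def using c by (simp add: divide_less_eq_1_pos flip: divide_divide_eq_left)
    also have "\<dots> \<longleftrightarrow> ln t < 0" using t by simp
    finally show ?thesis
      using setdist_horocycle[OF p pp c xx, folded t_def] by (simp add: horo_sdist_def)
  qed
  ultimately have "delta_d A l c x = t" using l(1) t by (simp add: delta_d_def p_def)
  then show ?thesis unfolding t_def p_def bil_line_pole .
qed

lemma delta_d_squared:
  assumes l: "l \<noteq> 0" and c: "c > 0"
  shows "\<exists>C>0. \<forall>x. B x x < 0 \<longrightarrow>
           delta_d A l c x \<ge> 0 \<and> (delta_d A l c x)^2 = C * (x \<bullet> l)^2 / (- B x x)"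
proof -
  define p where "p = line_pole A l"
  have Bp: "B w p = w \<bullet> l" for w unfolding p_def by (rule bil_line_pole)
  consider "deSitter_line A l" | "tangent_line A l" | "\<not> deSitter_line A l" "\<not> tangent_line A l"
    by blast
  then show ?thesis
  proof cases
    case 1
    have pp: "B p p < 0" using deSitter_line_pole_timelike[OF 1 l] unfolding p_def .
    have "delta_d A l c x \<ge> 0 \<and> (delta_d A l c x)^2 = (1 / - B p p) * (x \<bullet> l)^2 / (- B x x)"
      if xx: "B x x < 0" for x
      using 1 cosh_hdist_squared[OF xx pp] Bp[of x] xx pp
      by (simp add: delta_d_def p_def[symmetric] field_simps)
    moreover have "1 / - B p p > 0" using pp by simp
    ultimately show ?thesis by blast
  next
    case 2
    have "delta_d A l c x \<ge> 0 \<and> (delta_d A l c x)^2 = (1 / c^2) * (x \<bullet> l)^2 / (- B x x)"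
      if xx: "B x x < 0" for x
      using delta_d_tangent[OF 2 l c xx] xx c by (simp add: power_divide power_mult_distrib)
    moreover have "1 / c^2 > 0" using c by simp
    ultimately show ?thesis by blast
  next
    case 3
    have pp: "B p p > 0"
      using hyperbolic_line_pole_spacelike[OF hyperbolic_line_if_not_deSitter_tangent[OF 3] l]
      unfolding p_def .
    have hp: "hline_pts A l = {w. B w w < 0 \<and> B w p = 0}"
      using hline_pts_eq_orthogonal Bp by blast
    have "delta_d A l c x \<ge> 0 \<and> (delta_d A l c x)^2 = (1 / B p p) * (x \<bullet> l)^2 / (- B x x)"
      if xx: "B x x < 0" for x
      using 3 hp cosh_setdist_polar_squared[OF pp xx] Bp[of x] xx pp
      by (simp add: delta_d_def setdist_h_def sinh_square_eq field_simps)
    moreover have "1 / B p p > 0" using pp by simp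
    ultimately show ?thesis by blast
  qed
qed

subsection \<open>The focus--directrix equation\<close>

lemma dual_pencil_through_focus:
  assumes sQ: "transpose Q = Q" and invQ: "invertible Q"
    and focus: "is_focus A Q f" and not_ideal: "\<not> ideal_pt A f"
  shows "\<exists>t g. t \<noteq> 0 \<and>
           (\<forall>x y. bil (matrix_inv Q - t *\<^sub>R matrix_inv A) x y = (x \<bullet> f) * (g \<bullet> y) + (g \<bullet> x) * (f \<bullet> y))"
proof -
  have f: "f \<noteq> 0" using focus unfolding is_focus_def by blast
  obtain \<xi>1 \<xi>2 where \<xi>: "ctangent Q \<xi>1" "ctangent A \<xi>1" "ctangent Q \<xi>2" "ctangent A \<xi>2"
    "\<not> (\<exists>k. \<xi>2 = k *s \<xi>1)" "cdot \<xi>1 (cvec f) = 0" "cdot \<xi>2 (cvec f) = 0"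
    using focus not_ideal unfolding is_focus_def ideal_pt_def by blast
  define A' where "A' = matrix_inv A"
  define Q' where "Q' = matrix_inv Q"
  have sA': "transpose A' = A'" and sQ': "transpose Q' = Q'"
    unfolding A'_def Q'_def using symmetric_matrix_inv symmetric invertible sQ invQ by auto
  have iA': "invertible A'" and iQ': "invertible Q'"
    unfolding A'_def Q'_def using invertible_matrix_inv invertible invQ by auto
  have \<xi>1: "\<xi>1 \<noteq> 0" using \<xi>(1) unfolding ctangent_def by blast
  obtain \<eta>0 where \<eta>0: "\<eta>0 \<bullet> f = 0" "bil A' \<eta>0 \<eta>0 \<noteq> 0"
    using invertible_bil_nonvanishing_on_plane[OF sA' iA' f] by blast
  obtain t where t: "\<And>\<eta>. \<eta> \<bullet> f = 0 \<Longrightarrow> bil Q' \<eta> \<eta> = t * bil A' \<eta> \<eta>"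
    using dual_forms_proportional_on_pencil[OF sA' sQ' _ _ _ _ \<xi>1 \<xi>(5) f \<xi>(6,7) \<eta>0]
      ctangent_imp_dual_isotropic[OF symmetric invertible] ctangent_imp_dual_isotropic[OF sQ invQ]
      \<xi>(1-4) unfolding A'_def Q'_def by blast
  have "t \<noteq> 0"
    using t invertible_bil_nonvanishing_on_plane[OF sQ' iQ' f] by force
  moreover obtain g where "\<And>x y. bil (Q' - t *\<^sub>R A') x y = (x \<bullet> f) * (g \<bullet> y) + (g \<bullet> x) * (f \<bullet> y)"
    using bil_eq_symmetric_product[of "Q' - t *\<^sub>R A'" f] f t
    by (auto simp: transpose_diff_scaleR sA' sQ' bil_diff_scaleR_matrix)
  ultimately show ?thesis unfolding A'_def Q'_def by blast
qed

lemma conic_focus_normal_form: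
  assumes sQ: "transpose Q = Q" and invQ: "invertible Q"
    and focus: "is_focus A Q f" and not_ideal: "\<not> ideal_pt A f"
  shows "\<exists>t k. t \<noteq> 0 \<and>
           (\<forall>x y. t * bil Q x y = B x y - k * bil Q x f * bil Q y f - B x f * B y f / B f f)"
proof -
  have f: "f \<noteq> 0" using focus unfolding is_focus_def by blast
  have ff: "B f f \<noteq> 0" using not_ideal unfolding ideal_pt_def .
  obtain t g where t: "t \<noteq> 0" and g: "\<And>x y. bil (matrix_inv Q - t *\<^sub>R matrix_inv A) x y
                                              = (x \<bullet> f) * (g \<bullet> y) + (g \<bullet> x) * (f \<bullet> y)"
    using dual_pencil_through_focus[OF assms] by blast
  define P where "P x y = B x y - t * bil Q x y" for x y
  have P_sym: "P x y = P y x" for x y unfolding P_def using B_commute bil_commute[OF sQ] by metis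
  have P_g: "P x y = bil Q x f * (g \<bullet> (A *v y)) + (g \<bullet> (Q *v x)) * B y f" for x y
  proof -
    have "P x y = bil (matrix_inv Q - t *\<^sub>R matrix_inv A) (Q *v x) (A *v y)"
      unfolding P_def bil_inverse_pencil_conjugate[OF sQ invQ invertible] ..
    moreover have "(Q *v x) \<bullet> f = bil Q x f"
      by (simp add: bil_def symmetric_matrix_inner[OF sQ])
    moreover have "f \<bullet> (A *v y) = B y f"
      using B_commute[of y f] by (simp add: bil_def)
    ultimately show ?thesis unfolding g by simp
  qed
  define s where "s = t + g \<bullet> (A *v f)"
  define h where "h y = g \<bullet> (A *v y) - s * B y f / B f f" for y
  have "bil Q x f * (g \<bullet> (A *v f)) + (g \<bullet> (Q *v x)) * B f f = B x f - t * bil Q x f" for x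
    using P_g[of x f] unfolding P_def by simp
  then have g_Q: "g \<bullet> (Q *v x) = (B x f - s * bil Q x f) / B f f" for x
    unfolding s_def using ff by (simp add: field_simps)
  have P_h: "P x y = bil Q x f * h y + B x f * B y f / B f f" for x y
    unfolding P_g g_Q h_def using ff by (simp add: field_simps)
  define z where "z = Q *v f"
  have z: "bil Q z f \<noteq> 0"
    using f by (metis bil_def inner_eq_zero_iff invQ matrix_inv_cancel_vec(2)
        matrix_vector_mult_0_right symmetric_matrix_inner[OF sQ] z_def)
  define k where "k = h z / bil Q z f"
  have "h y = k * bil Q y f" for y
  proof -
    have "bil Q z f * h y = bil Q y f * h z"
      using P_h[of z y] P_h[of y z] P_sym[of z y] by (simp add: algebra_simps)
    then show ?thesis unfolding k_def using z by (simp add: field_simps)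
  qed
  then have "t * bil Q x y = B x y - k * bil Q x f * bil Q y f - B x f * B y f / B f f" for x y
    using P_h[of x y] unfolding P_def by (simp add: algebra_simps)
  with t show ?thesis by blast
qed

lemma focus_normal_form_coeff_nonzero:
  assumes not_cycle: "\<not> cycle_conic A Q" and f: "f \<noteq> 0" and t: "t \<noteq> 0" and ff: "B f f \<noteq> 0"
    and QF: "\<And>x y. t * bil Q x y = B x y - k * bil Q x f * bil Q y f - B x f * B y f / B f f"
  shows "k \<noteq> 0"
proof
  assume "k = 0"
  have axis_f: "B (axis i 1) f = (A *v f) $ i" for i by (simp add: bil_def inner_axis')
  have "t * Q $ i $ j = A $ i $ j - (A *v f) $ i * (A *v f) $ j / B f f" for i j
    using QF[of "axis i 1" "axis j 1"] \<open>k = 0\<close> unfolding bil_axis axis_f by simp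
  then have "Q = (1 / t) *\<^sub>R A + (- 1 / (t * B f f)) *\<^sub>R (\<chi> i j. (A *v f) $ i * (A *v f) $ j)"
    using t ff by (simp add: vec_eq_iff field_simps)
  moreover have "A *v f \<noteq> 0"
    using f matrix_inv_cancel_vec(2)[OF invertible, of f] by auto
  ultimately have "cycle_conic A Q"
    unfolding cycle_conic_def using t ff
    by (intro exI[of _ "1 / t"] exI[of _ "- 1 / (t * B f f)"] exI[of _ "A *v f"]) auto
  then show False using not_cycle by blast
qed

text \<open>Otherwise reverse Cauchy--Schwarz at a hyperbolic point \<open>x0\<close> of the conic forces
  \<open>f \<parallel> x0\<close>, and then \<open>Q f = 0\<close>.\<close>

lemma focus_normal_form_coeff_sign:
  assumes conic: "hyperbolic_conic A Q" and invQ: "invertible Q" and f: "f \<noteq> 0"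
    and t: "t \<noteq> 0" and ff: "B f f \<noteq> 0" and k: "k \<noteq> 0"
    and QF: "\<And>x y. t * bil Q x y = B x y - k * bil Q x f * bil Q y f - B x f * B y f / B f f"
  shows "k * B f f < 0"
proof (rule ccontr)
  assume "\<not> k * B f f < 0"
  moreover have "k * B f f \<noteq> 0" using k ff by simp
  ultimately have kff: "k * B f f > 0" by linarith
  obtain x0 where x0: "B x0 x0 < 0" "bil Q x0 x0 = 0"
    using conic unfolding hyperbolic_conic_def hyperbolic_pt_def by blast
  have "(B x0 f)^2 - B f f * B x0 x0 \<ge> 0"
    using reverse_cauchy_schwarz(1)[OF x0(1), of f] by (simp add: mult.commute)
  moreover have "(B x0 f)^2 - B f f * B x0 x0 = - (k * B f f) * (bil Q x0 f)^2"
    using QF[of x0 x0] x0(2) ff by (simp add: field_simps power2_eq_square)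
  moreover have "(k * B f f) * (bil Q x0 f)^2 \<ge> 0" using kff by simp
  ultimately have "(B x0 f)^2 - B f f * B x0 x0 = 0 \<and> (k * B f f) * (bil Q x0 f)^2 = 0"
    by (simp only: mult_minus_left) linarith
  then have "(B x0 f)^2 = B x0 x0 * B f f" "bil Q x0 f = 0"
    using kff by (auto simp: algebra_simps)
  moreover define \<gamma> where "\<gamma> = B x0 f / B x0 x0"
  ultimately have f_x0: "f = \<gamma> *\<^sub>R x0" and "bil Q x0 f = 0"
    using reverse_cauchy_schwarz(2)[OF x0(1)] by simp_all
  have "bil Q f f = bil Q (\<gamma> *\<^sub>R x0) f" using f_x0 by simp
  then have "bil Q f f = 0" using \<open>bil Q x0 f = 0\<close> by (simp add: bil_scaleR_left)
  then have "bil Q x f = 0" for x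
    using QF[of x f] ff t by simp
  from this[of "Q *v f"] have "Q *v f = 0" by (simp add: bil_def)
  then show False using matrix_inv_cancel_vec(2)[OF invQ, of f] f by simp
qed

lemma conic_focus_directrix_equation:
  assumes conic: "hyperbolic_conic A Q" and invQ: "invertible Q" and not_cycle: "\<not> cycle_conic A Q"
    and focus: "is_focus A Q f" and not_ideal: "\<not> ideal_pt A f"
  shows "\<exists>\<rho> \<kappa>. \<rho> \<noteq> 0 \<and> \<kappa> > 0 \<and>
           (\<forall>x. bil Q x x = \<rho> * ((B x f)^2 - B f f * B x x - \<kappa> * (bil Q x f)^2))"
proof -
  have sQ: "transpose Q = Q" using conic unfolding hyperbolic_conic_def by blast
  have f: "f \<noteq> 0" using focus unfolding is_focus_def by blast
  have ff: "B f f \<noteq> 0" using not_ideal unfolding ideal_pt_def .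
  obtain t k where t: "t \<noteq> 0" and QF: "\<And>x y. t * bil Q x y
                              = B x y - k * bil Q x f * bil Q y f - B x f * B y f / B f f"
    using conic_focus_normal_form[OF sQ invQ focus not_ideal] by blast
  have "k * B f f < 0"
    using focus_normal_form_coeff_sign[OF conic invQ f t ff _ QF]
      focus_normal_form_coeff_nonzero[OF not_cycle f t ff QF] by blast
  moreover have "bil Q x x = (- 1 / (t * B f f)) *
                   ((B x f)^2 - B f f * B x x - (- k * B f f) * (bil Q x f)^2)" for x
    using QF[of x x] t ff by (simp add: field_simps power2_eq_square)
  ultimately show ?thesis using t ff
    by (intro exI[of _ "- 1 / (t * B f f)"] exI[of _ "- k * B f f"]) auto
qed

lemma focus_directrix_ratio_iff:
  assumes not_ideal: "\<not> ideal_pt A f" and x: "B x x < 0" and \<kappa>: "\<kappa> > 0" and C: "C > 0"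
    and \<delta>d: "delta_d A d c x \<ge> 0 \<and> (delta_d A d c x)^2 = C * (x \<bullet> d)^2 / (- B x x)"
  shows "delta_F A f x = sqrt (\<kappa> / (C * \<bar>B f f\<bar>)) * delta_d A d c x
           \<longleftrightarrow> (B x f)^2 - B f f * B x x = \<kappa> * (x \<bullet> d)^2"
proof -
  define \<epsilon> where "\<epsilon> = sqrt (\<kappa> / (C * \<bar>B f f\<bar>))"
  have ff: "B f f \<noteq> 0" using not_ideal unfolding ideal_pt_def .
  have \<epsilon>: "\<epsilon> > 0" "\<epsilon>^2 = \<kappa> / (C * \<bar>B f f\<bar>)" unfolding \<epsilon>_def using \<kappa> C ff by auto
  have F: "(delta_F A f x)^2 = ((B x f)^2 - B f f * B x x) / (\<bar>B f f\<bar> * - B x x)"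
    using delta_F_squared[OF not_ideal x] x by (simp add: abs_mult mult.commute)
  have D: "(\<epsilon> * delta_d A d c x)^2 = \<kappa> * (x \<bullet> d)^2 / (\<bar>B f f\<bar> * - B x x)"
    using \<delta>d C ff x by (simp add: power_mult_distrib \<epsilon>(2) field_simps)
  have "delta_F A f x = \<epsilon> * delta_d A d c x \<longleftrightarrow> (delta_F A f x)^2 = (\<epsilon> * delta_d A d c x)^2"
    by (rule power2_eq_iff_nonneg[symmetric]) (use delta_F_squared[OF not_ideal x] \<delta>d \<epsilon>(1) in auto)
  also have "\<dots> \<longleftrightarrow> (B x f)^2 - B f f * B x x = \<kappa> * (x \<bullet> d)^2"
    unfolding F D using ff x by (simp add: divide_cancel_right)
  finally show ?thesis unfolding \<epsilon>_def .
qed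

end

theorem mainTheorem19:
  fixes A Q :: "real^3^3" and f :: "real^3" and c :: real
  assumes "transpose A = A" and "signature_mpp A"
    and "hyperbolic_conic A Q" and "det Q \<noteq> 0" and "\<not> cycle_conic A Q"
    and "is_focus A Q f" and "\<not> ideal_pt A f"
    and "c > 0"
  shows "\<exists>\<epsilon>>0. \<forall>x. hyperbolic_pt A x \<longrightarrow>
           (bil Q x x = 0 \<longleftrightarrow>
            delta_F A f x = \<epsilon> * delta_d A (polar_line Q f) c x)"
proof -
  interpret lorentz_form A using assms(1,2) by unfold_locales
  define d where "d = polar_line Q f"
  have sQ: "transpose Q = Q" using assms(3) unfolding hyperbolic_conic_def by blast
  have invQ: "invertible Q" using assms(4) invertible_det_nz by blast
  have ff: "B f f \<noteq> 0" using assms(7) unfolding ideal_pt_def .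
  have d: "d \<noteq> 0" "\<And>x. x \<bullet> d = bil Q x f"
    unfolding d_def using polar_line_nonzero[OF sQ invQ] assms(6) inner_polar_line[OF sQ]
    by (auto simp: is_focus_def)
  obtain \<rho> \<kappa> where \<rho>: "\<rho> \<noteq> 0" and \<kappa>: "\<kappa> > 0"
    and Q: "\<forall>x. bil Q x x = \<rho> * ((B x f)^2 - B f f * B x x - \<kappa> * (bil Q x f)^2)"
    using conic_focus_directrix_equation[OF assms(3) invQ assms(5-7)] by blast
  obtain C where C: "C > 0" "\<And>x. B x x < 0 \<Longrightarrow>
      delta_d A d c x \<ge> 0 \<and> (delta_d A d c x)^2 = C * (x \<bullet> d)^2 / (- B x x)"
    using delta_d_squared[OF d(1) assms(8)] by blast
  have "bil Q x x = 0 \<longleftrightarrow> delta_F A f x = sqrt (\<kappa> / (C * \<bar>B f f\<bar>)) * delta_d A d c x"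
    if "B x x < 0" for x
    using focus_directrix_ratio_iff[OF assms(7) that \<kappa> C(1) C(2)[OF that]] Q \<rho> d(2) by simp
  moreover have "sqrt (\<kappa> / (C * \<bar>B f f\<bar>)) > 0" using \<kappa> C(1) ff by simp
  ultimately show ?thesis unfolding d_def hyperbolic_pt_def by blast
qed

end
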